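(* Let $(\Omega,\mathcal{F})$ be a measurable space, $\mathcal{P}$ a nonempty set of probability measures on it, $\hat{\mathbb{E}}[Z]=\sup_{P\in\mathcal{P}}E_P[Z]$, and let $X,Y$ be random variables with $\hat{\mathbb{E}}[X^2]+\hat{\mathbb{E}}[Y^2]<\infty$. Suppose $\overline{\mu}_X=\underline{\mu}_X=:\mu_X$, and let $\rho_Y=\frac12(\overline{\mu}_Y+\underline{\mu}_Y)$. Then $$\overline{C}(X,Y)=\hat{\mathbb{E}}[(X-\mu_X)(Y-\rho_Y)],\qquad \underline{C}(X,Y)=-\hat{\mathbb{E}}[-(X-\mu_X)(Y-\rho_Y)].$$
   Context: For a random variable $W$ with $\hat{\mathbb{E}}[W^2]<\infty$: $\overline{\mu}_W=\hat{\mathbb{E}}[W]$, $\underline{\mu}_W=-\hat{\mathbb{E}}[-W]$, $M_W=[\underline{\mu}_W,\overline{\mu}_W]$. Upper covariance $\overline{C}(X,Y)=\max_{\mu_2\in M_Y}\min_{\mu_1\in M_X}\hat{\mathbb{E}}[(X-\mu_1)(Y-\mu_2)]$; lower covariance $\underline{C}(X,Y)=\min_{\mu_2\in M_Y}\max_{\mu_1\in M_X}\left(-\hat{\mathbb{E}}[-(X-\mu_1)(Y-\mu_2)]\right)$. *)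

theory Defs
  imports "HOL-Probability.Probability"
begin

definition sl_exp :: "'a measure set \<Rightarrow> ('a \<Rightarrow> real) \<Rightarrow> real" where
  "sl_exp Ps Z = (SUP P\<in>Ps. integral\<^sup>L P Z)"

definition upper_mean :: "'a measure set \<Rightarrow> ('a \<Rightarrow> real) \<Rightarrow> real" where
  "upper_mean Ps W = sl_exp Ps W"

definition lower_mean :: "'a measure set \<Rightarrow> ('a \<Rightarrow> real) \<Rightarrow> real" where
  "lower_mean Ps W = - sl_exp Ps (\<lambda>w. - W w)"

definition mean_interval :: "'a measure set \<Rightarrow> ('a \<Rightarrow> real) \<Rightarrow> real set" where
  "mean_interval Ps W = {lower_mean Ps W .. upper_mean Ps W}"

definition upper_cov :: "'a measure set \<Rightarrow> ('a \<Rightarrow> real) \<Rightarrow> ('a \<Rightarrow> real) \<Rightarrow> real" where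
  "upper_cov Ps X Y =
     (SUP m2\<in>mean_interval Ps Y. INF m1\<in>mean_interval Ps X.
        sl_exp Ps (\<lambda>w. (X w - m1) * (Y w - m2)))"

definition lower_cov :: "'a measure set \<Rightarrow> ('a \<Rightarrow> real) \<Rightarrow> ('a \<Rightarrow> real) \<Rightarrow> real" where
  "lower_cov Ps X Y =
     (INF m2\<in>mean_interval Ps Y. SUP m1\<in>mean_interval Ps X.
        - sl_exp Ps (\<lambda>w. - ((X w - m1) * (Y w - m2))))"

end

theory Submission
  imports Defs
begin

text \<open>If every measure in the family gives X the same mean \<open>\<mu>\<close>, then under each of them
  \<open>E[(X - \<mu>)(Y - b)] = E[(X - \<mu>) Y] - b (E[X] - \<mu>)\<close> does not depend on the centring \<open>b\<close> of
  \<open>Y\<close>. So the sublinear expectation of \<open>(X - \<mu>)(Y - b)\<close> is the same for all \<open>b\<close>, the inner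
  optimisation in the covariances ranges over the singleton \<open>{\<mu>}\<close>, and the outer one is over
  a constant function; in particular \<open>b\<close> may be taken to be the midpoint \<open>\<rho>\<^sub>Y\<close>.
  Finite second moments make all integrals involved exist and keep the means bounded.\<close>

lemma (in finite_measure) integrable_if_nn_integral_square_finite:
  fixes Z :: "'a \<Rightarrow> real"
  assumes "Z \<in> borel_measurable M" and "(\<integral>\<^sup>+ w. ennreal ((Z w)\<^sup>2) \<partial>M) < \<infinity>"
  shows "integrable M (\<lambda>w. (Z w)\<^sup>2)" and "integrable M Z"
proof -
  show sq: "integrable M (\<lambda>w. (Z w)\<^sup>2)"
    using assms unfolding integrable_iff_bounded by auto
  show "integrable M Z"
    using square_integrable_imp_integrable[OF assms(1) sq] .
qed

lemma (in prob_space) abs_expectation_le_one_plus_second_moment: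
  fixes Z :: "'a \<Rightarrow> real"
  assumes "integrable M Z" and "integrable M (\<lambda>w. (Z w)\<^sup>2)"
  shows "\<bar>expectation Z\<bar> \<le> 1 + expectation (\<lambda>w. (Z w)\<^sup>2)"
proof -
  have "\<bar>expectation Z\<bar> \<le> expectation (\<lambda>w. \<bar>Z w\<bar>)"
    by (rule integral_abs_bound)
  also have "\<dots> \<le> expectation (\<lambda>w. 1 + (Z w)\<^sup>2)"
  proof (rule integral_mono)
    fix w
    show "\<bar>Z w\<bar> \<le> 1 + (Z w)\<^sup>2"
      using zero_le_power2[of "\<bar>Z w\<bar> - 1/2"]
      by (simp add: power2_eq_square abs_mult_self_eq algebra_simps)
  qed (use assms in auto)
  also have "\<dots> = 1 + expectation (\<lambda>w. (Z w)\<^sup>2)"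
    using assms(2) by (simp add: prob_space)
  finally show ?thesis .
qed

lemma integrable_mult_if_square_integrable:
  fixes X Y :: "'a \<Rightarrow> real"
  assumes "X \<in> borel_measurable M" "Y \<in> borel_measurable M"
    and "integrable M (\<lambda>w. (X w)\<^sup>2)" "integrable M (\<lambda>w. (Y w)\<^sup>2)"
  shows "integrable M (\<lambda>w. X w * Y w)"
proof (rule Bochner_Integration.integrable_bound)
  show "integrable M (\<lambda>w. (X w)\<^sup>2 + (Y w)\<^sup>2)"
    using assms(3,4) by auto
  show "(\<lambda>w. X w * Y w) \<in> borel_measurable M"
    using assms(1,2) by measurable
  show "AE w in M. norm (X w * Y w) \<le> norm ((X w)\<^sup>2 + (Y w)\<^sup>2)"
  proof (rule AE_I2)
    fix w
    have "2 * \<bar>X w\<bar> * \<bar>Y w\<bar> \<le> (X w)\<^sup>2 + (Y w)\<^sup>2"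
      using sum_squares_bound[of "\<bar>X w\<bar>" "\<bar>Y w\<bar>"] by simp
    moreover have "0 \<le> \<bar>X w\<bar> * \<bar>Y w\<bar>" by simp
    ultimately have "\<bar>X w\<bar> * \<bar>Y w\<bar> \<le> (X w)\<^sup>2 + (Y w)\<^sup>2" by linarith
    then show "norm (X w * Y w) \<le> norm ((X w)\<^sup>2 + (Y w)\<^sup>2)"
      by (simp add: abs_mult)
  qed
qed

lemma (in prob_space) expectation_centred_mult_shift:
  fixes X Y :: "'a \<Rightarrow> real"
  assumes "integrable M X" "integrable M Y" "integrable M (\<lambda>w. X w * Y w)"
    and "expectation X = \<mu>"
  shows "expectation (\<lambda>w. (X w - \<mu>) * (Y w - b)) = expectation (\<lambda>w. (X w - \<mu>) * Y w)"
proof -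
  have "(\<lambda>w. (X w - \<mu>) * (Y w - b)) = (\<lambda>w. (X w * Y w - \<mu> * Y w) - b * (X w - \<mu>))"
    by (auto simp: algebra_simps)
  moreover have "expectation (\<lambda>w. b * (X w - \<mu>)) = 0"
    using assms(1,4) by (simp add: prob_space)
  ultimately show ?thesis
    using assms(1-3) by (simp add: left_diff_distrib)
qed

lemma integrable_if_SUP_second_moment_finite:
  fixes Z :: "'a \<Rightarrow> real"
  assumes "P \<in> Ps" and "prob_space P" and "Z \<in> borel_measurable P"
    and "(SUP P\<in>Ps. \<integral>\<^sup>+ w. ennreal ((Z w)\<^sup>2) \<partial>P) < \<infinity>"
  shows "integrable P (\<lambda>w. (Z w)\<^sup>2)" and "integrable P Z"
proof -
  interpret prob_space P by fact
  have "(\<integral>\<^sup>+ w. ennreal ((Z w)\<^sup>2) \<partial>P) < \<infinity>"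
    using le_less_trans[OF SUP_upper[OF assms(1)] assms(4)] .
  then show "integrable P (\<lambda>w. (Z w)\<^sup>2)" and "integrable P Z"
    using integrable_if_nn_integral_square_finite[OF assms(3)] by simp_all
qed

lemma bdd_above_integrals_if_SUP_second_moment_finite:
  fixes Z :: "'a \<Rightarrow> real"
  assumes "\<And>P. P \<in> Ps \<Longrightarrow> prob_space P" and "\<And>P. P \<in> Ps \<Longrightarrow> Z \<in> borel_measurable P"
    and "(SUP P\<in>Ps. \<integral>\<^sup>+ w. ennreal ((Z w)\<^sup>2) \<partial>P) < \<infinity>"
  shows "bdd_above ((\<lambda>P. integral\<^sup>L P Z) ` Ps)"
    and "bdd_above ((\<lambda>P. integral\<^sup>L P (\<lambda>w. - Z w)) ` Ps)"
proof -
  define S where "S = (SUP P\<in>Ps. \<integral>\<^sup>+ w. ennreal ((Z w)\<^sup>2) \<partial>P)"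
  have bound: "\<bar>integral\<^sup>L P Z\<bar> \<le> 1 + enn2real S" if P: "P \<in> Ps" for P
  proof -
    interpret prob_space P using assms(1)[OF P] .
    note int = integrable_if_SUP_second_moment_finite[OF P assms(1)[OF P] assms(2)[OF P] assms(3)]
    have "\<bar>expectation Z\<bar> \<le> 1 + expectation (\<lambda>w. (Z w)\<^sup>2)"
      using abs_expectation_le_one_plus_second_moment[OF int(2,1)] .
    also have "expectation (\<lambda>w. (Z w)\<^sup>2) = enn2real (\<integral>\<^sup>+ w. ennreal ((Z w)\<^sup>2) \<partial>P)"
      using integral_eq_nn_integral[of "\<lambda>w. (Z w)\<^sup>2"] assms(2)[OF P] by simp
    also have "\<dots> \<le> enn2real S"
      using SUP_upper[OF P, of "\<lambda>P. \<integral>\<^sup>+ w. ennreal ((Z w)\<^sup>2) \<partial>P"] assms(3)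
      unfolding S_def by (simp add: enn2real_mono)
    finally show ?thesis by simp
  qed
  then show "bdd_above ((\<lambda>P. integral\<^sup>L P Z) ` Ps)"
    and "bdd_above ((\<lambda>P. integral\<^sup>L P (\<lambda>w. - Z w)) ` Ps)"
    unfolding bdd_above_def by (auto intro!: exI[of _ "1 + enn2real S"] simp: abs_le_iff)
qed

lemma integral_le_sl_exp:
  assumes "bdd_above ((\<lambda>P. integral\<^sup>L P Z) ` Ps)" and "P \<in> Ps"
  shows "integral\<^sup>L P Z \<le> sl_exp Ps Z"
  unfolding sl_exp_def using assms(2,1) by (rule cSUP_upper)

lemma lower_mean_le_integral_le_upper_mean:
  assumes "bdd_above ((\<lambda>P. integral\<^sup>L P Z) ` Ps)"
    and "bdd_above ((\<lambda>P. integral\<^sup>L P (\<lambda>w. - Z w)) ` Ps)"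
    and "P \<in> Ps"
  shows "lower_mean Ps Z \<le> integral\<^sup>L P Z" and "integral\<^sup>L P Z \<le> upper_mean Ps Z"
  using integral_le_sl_exp[OF assms(1,3)] integral_le_sl_exp[OF assms(2,3)]
  unfolding lower_mean_def upper_mean_def by simp_all

lemma sl_exp_centred_mult_shift:
  fixes X Y :: "'a \<Rightarrow> real"
  assumes "\<And>P. P \<in> Ps \<Longrightarrow> prob_space P"
    and "\<And>P. P \<in> Ps \<Longrightarrow> X \<in> borel_measurable P" and "\<And>P. P \<in> Ps \<Longrightarrow> Y \<in> borel_measurable P"
    and "(SUP P\<in>Ps. \<integral>\<^sup>+ w. ennreal ((X w)\<^sup>2) \<partial>P) < \<infinity>"
    and "(SUP P\<in>Ps. \<integral>\<^sup>+ w. ennreal ((Y w)\<^sup>2) \<partial>P) < \<infinity>"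
    and "\<And>P. P \<in> Ps \<Longrightarrow> integral\<^sup>L P X = \<mu>"
  shows "sl_exp Ps (\<lambda>w. (X w - \<mu>) * (Y w - b)) = sl_exp Ps (\<lambda>w. (X w - \<mu>) * Y w)"
    and "sl_exp Ps (\<lambda>w. - ((X w - \<mu>) * (Y w - b))) = sl_exp Ps (\<lambda>w. - ((X w - \<mu>) * Y w))"
proof -
  have shift: "integral\<^sup>L P (\<lambda>w. (X w - \<mu>) * (Y w - b)) = integral\<^sup>L P (\<lambda>w. (X w - \<mu>) * Y w)"
    if P: "P \<in> Ps" for P
  proof -
    interpret prob_space P using assms(1)[OF P] .
    note X_int = integrable_if_SUP_second_moment_finite[OF P assms(1)[OF P] assms(2)[OF P] assms(4)]
    note Y_int = integrable_if_SUP_second_moment_finite[OF P assms(1)[OF P] assms(3)[OF P] assms(5)]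
    have "integrable P (\<lambda>w. X w * Y w)"
      using integrable_mult_if_square_integrable[OF assms(2,3)[OF P] X_int(1) Y_int(1)] .
    then show ?thesis
      by (rule expectation_centred_mult_shift[OF X_int(2) Y_int(2) _ assms(6)[OF P]])
  qed
  then show "sl_exp Ps (\<lambda>w. (X w - \<mu>) * (Y w - b)) = sl_exp Ps (\<lambda>w. (X w - \<mu>) * Y w)"
    and "sl_exp Ps (\<lambda>w. - ((X w - \<mu>) * (Y w - b))) = sl_exp Ps (\<lambda>w. - ((X w - \<mu>) * Y w))"
    unfolding sl_exp_def by (auto intro!: SUP_cong)
qed

lemma upper_cov_eq_if_mean_interval_singleton:
  assumes "mean_interval Ps X = {\<mu>}" and "mean_interval Ps Y \<noteq> {}"
    and "\<And>b. sl_exp Ps (\<lambda>w. (X w - \<mu>) * (Y w - b)) = c"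
  shows "upper_cov Ps X Y = c"
  unfolding upper_cov_def by (simp add: assms)

lemma lower_cov_eq_if_mean_interval_singleton:
  assumes "mean_interval Ps X = {\<mu>}" and "mean_interval Ps Y \<noteq> {}"
    and "\<And>b. sl_exp Ps (\<lambda>w. - ((X w - \<mu>) * (Y w - b))) = c"
  shows "lower_cov Ps X Y = - c"
  unfolding lower_cov_def by (simp add: assms)

theorem corollary3p17:
  fixes M :: "'a measure" and Ps :: "'a measure set" and X Y :: "'a \<Rightarrow> real"
  assumes "Ps \<noteq> {}"
    and "\<And>P. P \<in> Ps \<Longrightarrow> prob_space P \<and> sets P = sets M"
    and "X \<in> borel_measurable M" and "Y \<in> borel_measurable M"
    and "(SUP P\<in>Ps. \<integral>\<^sup>+ w. ennreal ((X w)\<^sup>2) \<partial>P) + (SUP P\<in>Ps. \<integral>\<^sup>+ w. ennreal ((Y w)\<^sup>2) \<partial>P) < \<infinity>"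
    and "upper_mean Ps X = lower_mean Ps X"
  shows "upper_cov Ps X Y =
           sl_exp Ps (\<lambda>w. (X w - upper_mean Ps X) * (Y w - (upper_mean Ps Y + lower_mean Ps Y) / 2))
    \<and> lower_cov Ps X Y =
           - sl_exp Ps (\<lambda>w. - ((X w - upper_mean Ps X) * (Y w - (upper_mean Ps Y + lower_mean Ps Y) / 2)))"
proof -
  define \<mu> where "\<mu> = upper_mean Ps X"
  have P_space: "prob_space P" and X_meas: "X \<in> borel_measurable P"
    and Y_meas: "Y \<in> borel_measurable P" if "P \<in> Ps" for P
    using assms(2)[OF that] assms(3,4) measurable_cong_sets by blast+
  have SUP_X: "(SUP P\<in>Ps. \<integral>\<^sup>+ w. ennreal ((X w)\<^sup>2) \<partial>P) < \<infinity>"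
    and SUP_Y: "(SUP P\<in>Ps. \<integral>\<^sup>+ w. ennreal ((Y w)\<^sup>2) \<partial>P) < \<infinity>"
    using assms(5) by (auto simp: top_unique[symmetric] less_top)
  note X_bdd = bdd_above_integrals_if_SUP_second_moment_finite[OF P_space X_meas SUP_X]
  note Y_bdd = bdd_above_integrals_if_SUP_second_moment_finite[OF P_space Y_meas SUP_Y]
  have "integral\<^sup>L P X = \<mu>" if "P \<in> Ps" for P
    using lower_mean_le_integral_le_upper_mean[OF X_bdd that] assms(6)
    unfolding \<mu>_def by linarith
  note shift = sl_exp_centred_mult_shift[OF P_space X_meas Y_meas SUP_X SUP_Y this]
  have "mean_interval Ps X = {\<mu>}"
    unfolding mean_interval_def \<mu>_def using assms(6) by simp
  moreover obtain P0 where "P0 \<in> Ps" using assms(1) by blast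
  then have "mean_interval Ps Y \<noteq> {}"
    using lower_mean_le_integral_le_upper_mean[OF Y_bdd] unfolding mean_interval_def by fastforce
  ultimately show ?thesis
    unfolding \<mu>_def[symmetric]
    using upper_cov_eq_if_mean_interval_singleton lower_cov_eq_if_mean_interval_singleton shift
    by metis
qed

end
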